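(* The sequence $(h(n))_{n\ge0}$ is not strongly $3$-recursive. In fact, for any natural numbers $r<t$, the sequence $(h(3^tn))_{n\ge0}$ is not a linear combination of the sequences $(h(3^rn+a))_{n\ge0}$, $0\le a<3^r$.
   Context: Define $h:\mathbb N\to\mathbb N$ by $h(0)=0$; $h(n)=h(\lfloor n/3\rfloor)+(\lfloor n/3\rfloor \bmod 2)$ if $n>0$ and $n\equiv 0$ or $2\pmod 3$; and $h(n)=h(\lfloor n/9\rfloor)+1$ if $n\equiv1\pmod 3$. Here $x\bmod 2\in\{0,1\}$ is the least nonnegative remainder. A sequence $(f(n))_{n\ge 0}$ is strongly $k$-recursive if there exist natural numbers $r<t$ such that for every $b$ with $0\le b<k^t$, the sequence $(f(k^t n+b))_{n\ge 0}$ is a linear combination, with constant coefficients, of the sequences $(f(k^r n+a))_{n\ge0}$ with $0\le a<k^r$. *)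

theory Defs
  imports "HOL-Analysis.Analysis"
begin

function h :: "nat \<Rightarrow> nat" where
  "h n = (if n = 0 then 0
          else if n mod 3 = 1 then h (n div 9) + 1
          else h (n div 3) + (n div 3) mod 2)"
  by auto
termination
  by (relation "Wellfounded.measure id") auto

definition lin_comb_of :: "(nat \<Rightarrow> real) \<Rightarrow> (nat \<Rightarrow> nat \<Rightarrow> real) \<Rightarrow> nat \<Rightarrow> bool" where
  "lin_comb_of f g m \<longleftrightarrow> (\<exists>c :: nat \<Rightarrow> real. \<forall>n. f n = (\<Sum>a<m. c a * g a n))"

definition strongly_recursive :: "nat \<Rightarrow> (nat \<Rightarrow> real) \<Rightarrow> bool" where
  "strongly_recursive k f \<longleftrightarrow>
     (\<exists>r t. r < t \<and> (\<forall>b < k ^ t.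
        lin_comb_of (\<lambda>n. f (k ^ t * n + b)) (\<lambda>a n. f (k ^ r * n + a)) (k ^ r)))"

end

theory Submission
  imports Defs
begin

text \<open>Unfolding the recursion shows that \<open>h n\<close> is the number of odd numbers among
  \<open>n, n div 3, n div 9, \<dots>\<close>. Consequently \<open>h (3^r n + a)\<close> is \<open>h n\<close> plus \<open>r\<close> parities
  that depend only on \<open>a\<close> and on the parity of \<open>n\<close>, whereas \<open>h (3^t n) = h n + t (n mod 2)\<close>.
  Testing a putative linear relation at \<open>n = 0, 1, 3\<close> shows that the coefficients sum to 1 and
  then forces \<open>t = r\<close>.\<close>

declare h.simps[simp del]

lemma h_0 [simp]: "h 0 = 0"
  by (subst h.simps) simp

lemma h_eq_h_div3: "h n = h (n div 3) + n mod 2"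
proof (induction n rule: less_induct)
  case (less n)
  show ?case
  proof (cases "n = 0")
    case False
    define q where "q = n div 3"
    have "q < n" using False by (simp add: q_def)
    show ?thesis
    proof (cases "n mod 3 = 1")
      case True
      have "n = 3 * q + 1" using True div_mult_mod_eq[of n 3] unfolding q_def by linarith
      then have parity: "n mod 2 + q mod 2 = 1" by presburger
      have "h n = h (q div 3) + 1"
        using False True by (subst h.simps) (simp add: q_def div_mult2_eq[symmetric])
      also have "\<dots> = h q + n mod 2"
        using less.IH[OF \<open>q < n\<close>] parity by linarith
      finally show ?thesis by (simp add: q_def)
    next
      case False': False
      have "n = 3 * q \<or> n = 3 * q + 2"
        using False' div_mult_mod_eq[of n 3] mod_less_divisor[of 3 n] unfolding q_def by linarith
      then have "n mod 2 = q mod 2" by presburger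
      then show ?thesis using False False' unfolding q_def by (subst h.simps) simp
    qed
  qed simp
qed

lemma h_pow3_mult_add:
  assumes "a < 3 ^ r"
  shows "h (3 ^ r * n + a) = h n + (\<Sum>j<r. (n + a div 3 ^ j) mod 2)"
  using assms
proof (induction r arbitrary: a)
  case (Suc r)
  have "odd ((3::nat) ^ Suc r)" by simp
  then obtain k where k: "(3::nat) ^ Suc r = 2 * k + 1" by (metis oddE)
  have "3 ^ Suc r * n + a = (n + a) + 2 * (k * n)"
    unfolding k by (simp add: algebra_simps)
  then have "(3 ^ Suc r * n + a) mod 2 = (n + a) mod 2"
    by (metis mod_mult_self2)
  moreover have "(3 ^ Suc r * n + a) div 3 = 3 ^ r * n + a div 3"
    by simp
  ultimately have "h (3 ^ Suc r * n + a) = h (3 ^ r * n + a div 3) + (n + a) mod 2"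
    using h_eq_h_div3[of "3 ^ Suc r * n + a"] by simp
  also have "\<dots> = h n + (\<Sum>j<r. (n + a div 3 div 3 ^ j) mod 2) + (n + a) mod 2"
    using Suc by simp
  also have "\<dots> = h n + (\<Sum>j<Suc r. (n + a div 3 ^ j) mod 2)"
    by (simp only: sum.lessThan_Suc_shift) (simp add: div_mult2_eq)
  finally show ?case .
qed simp

lemma h_pow3_mult: "h (3 ^ t * n) = h n + t * (n mod 2)"
  using h_pow3_mult_add[of 0 t n] by simp

lemma sum_parities_complement:
  "(\<Sum>j<r. (Suc n + m j) mod 2) + (\<Sum>j<r. (n + m j) mod 2) = (r :: nat)"
proof -
  have "(Suc n + m j) mod 2 + (n + m j) mod 2 = 1" for j by presburger
  then show ?thesis by (simp add: sum.distrib[symmetric])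
qed

lemma not_lin_comb_h_pow3:
  assumes "r < t"
  shows "\<not> lin_comb_of (\<lambda>n. real (h (3 ^ t * n))) (\<lambda>a n. real (h (3 ^ r * n + a))) (3 ^ r)"
proof
  assume "lin_comb_of (\<lambda>n. real (h (3 ^ t * n))) (\<lambda>a n. real (h (3 ^ r * n + a))) (3 ^ r)"
  then obtain c where c: "\<And>n. real (h (3 ^ t * n)) = (\<Sum>a<3^r. c a * real (h (3 ^ r * n + a)))"
    unfolding lin_comb_of_def by blast
  define P where "P n a = (\<Sum>j<r. (n + a div 3 ^ j) mod (2::nat))" for n a
  have P_3: "P 3 a = P 1 a" for a
  proof -
    have "(3 + x) mod 2 = (1 + x) mod 2" for x :: nat by presburger
    then show ?thesis by (simp add: P_def)
  qed
  have P_1: "real (P 1 a) = real r - real (P 0 a)" for a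
  proof -
    have "P 1 a + P 0 a = r"
      using sum_parities_complement[of 0 "\<lambda>j. a div 3 ^ j" r] by (simp add: P_def)
    then show ?thesis by (metis add_diff_cancel_right' of_nat_add)
  qed
  have h_1: "h 1 = 1" and h_3: "h 3 = 2"
    using h_eq_h_div3[of 1] h_eq_h_div3[of 3] by simp_all
  have at_n: "real (h n) + real (t * (n mod 2)) = (\<Sum>a<3^r. c a * (real (h n) + real (P n a)))" for n
    using c[of n] h_pow3_mult[of t n] h_pow3_mult_add[of _ r n] by (simp add: P_def)
  have at_0: "(\<Sum>a<3^r. c a * real (P 0 a)) = 0"
    using at_n[of 0] by simp
  have at_1: "(\<Sum>a<3^r. c a * (1 + real (P 1 a))) = 1 + real t"
    using at_n[of 1] h_1 by simp
  have at_3: "(\<Sum>a<3^r. c a * (2 + real (P 1 a))) = 2 + real t"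
    using at_n[of 3] h_3 P_3 by simp
  have "(\<Sum>a<3^r. c a) = (\<Sum>a<3^r. c a * (2 + real (P 1 a))) - (\<Sum>a<3^r. c a * (1 + real (P 1 a)))"
    by (simp add: sum_subtractf[symmetric] algebra_simps)
  then have sum_c: "(\<Sum>a<3^r. c a) = 1"
    using at_1 at_3 by simp
  have "1 + real t = (\<Sum>a<3^r. c a) * (1 + real r) - (\<Sum>a<3^r. c a * real (P 0 a))"
    unfolding at_1[symmetric] P_1
    by (simp add: algebra_simps sum.distrib sum_subtractf sum_distrib_left sum_distrib_right)
  then have "real t = real r"
    using sum_c at_0 by simp
  then show False using assms by simp
qed

theorem mainTheorem11:
  shows "\<not> strongly_recursive 3 (\<lambda>n. real (h n)) \<and>
    (\<forall>r t :: nat. r < t \<longrightarrow>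
       \<not> lin_comb_of (\<lambda>n. real (h (3 ^ t * n))) (\<lambda>a n. real (h (3 ^ r * n + a))) (3 ^ r))"
proof
  show "\<not> strongly_recursive 3 (\<lambda>n. real (h n))"
  proof
    assume "strongly_recursive 3 (\<lambda>n. real (h n))"
    then obtain r t where "r < t" and
      "lin_comb_of (\<lambda>n. real (h (3 ^ t * n + 0))) (\<lambda>a n. real (h (3 ^ r * n + a))) (3 ^ r)"
      unfolding strongly_recursive_def by fastforce
    then show False using not_lin_comb_h_pow3 by simp
  qed
qed (use not_lin_comb_h_pow3 in blast)

end
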